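(* Let ${\mathcal M}$ be a $q$-matroid on $\mathbb{F}_q^n$ of rank $r\ge1$, and let $F_1,\dots,F_t$ be its bases listed in increasing order with respect to $\prec_q^r$. Order the facets of the order complex $I_{{\mathcal M}}$ by $\prec_\ell$ and let $\mathcal{R}$ be the associated restriction operator. Then there exists a facet $A$ of $I_{{\mathcal M}}$ with $\mathcal{R}(A)=A$ if and only if there exist indices $1\le i<j\le t$ such that $\dim_{\mathbb{F}_q}(F_i\cap F_j)=r-1$ and $\min(F_j\setminus\{0\})\notin F_i$, where the minimum is taken with respect to $\prec$.
   Context: A $q$-matroid is a pair $(E,\rho)$, $E=\mathbb{F}_q^n$, with $\rho$ from subspaces to $\mathbb{Z}_{\ge0}$ satisfying $0\le\rho(X)\le\dim X$, monotonicity, and $\rho(X+Y)+\rho(X\cap Y)\le\rho(X)+\rho(Y)$; rank $=\rho(E)$; $U$ is independent if $\rho(U)=\dim U$; bases are maximal independent subspaces (all of dimension $r$). Fix a total order $\prec$ on $\mathbb{F}_q$ with $0\prec1\prec\alpha$ for all $\alpha\ne0,1$, extended lexicographically to $\mathbb{F}_q^n$ and to tuples in $(\mathbb{F}_q^n)^k$. For a $k$-dimensional subspace $U$ with reduced row echelon generator matrix having rows $u_k,u_{k-1},\dots,u_1$ from top to bottom, its reduced generator is $(u_1,\dots,u_k)$; the order $\prec_q^k$ on $k$-dimensional subspaces is the lexicographic order of reduced generators. The order complex $I_{{\mathcal M}}$ is the simplicial complex whose vertices are the nonzero independent subspaces and whose faces are chains of them; its facets are the chains $A=(A_1\subsetneq\cdots\subsetneq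 A_r)$ of independent subspaces with $\dim A_m=m$. For two such facets $U,V$, $U\prec_\ell V$ iff, for the largest index $e$ with $U_e\ne V_e$, one has $U_e\prec_q^e V_e$; this linear order of facets is a shelling of $I_{{\mathcal M}}$. For a facet $A$, $\mathcal{R}(A)$ is the set of vertices $A_m$ of $A$ such that $A\setminus\{A_m\}$ is a face of some facet preceding $A$ in the order $\prec_\ell$. *)

theory Defs
  imports "HOL-Analysis.Cartesian_Space"
begin

text \<open>Ambient space: E = F_q^n is modelled as the type 'a^('n::{finite,linorder}), where 'a is a finite
field (so 'a = F_q) and 'n is a finite linearly ordered index type with CARD('n) = n;
the order of 'n gives the coordinate positions 1, ..., n.
The total order on F_q is given by an injective key  fo :: 'a => nat  with
fo 0 < fo 1 < fo a for all a not in {0,1}.\<close>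

definition field_order :: "('a::{finite,field} \<Rightarrow> nat) \<Rightarrow> bool" where
  "field_order fo \<longleftrightarrow> inj fo \<and> fo 0 < fo 1 \<and> (\<forall>a. a \<noteq> 0 \<and> a \<noteq> 1 \<longrightarrow> fo 1 < fo a)"

definition vlt :: "('a \<Rightarrow> nat) \<Rightarrow> 'a^('n::{finite,linorder}) \<Rightarrow> 'a^('n::{finite,linorder}) \<Rightarrow> bool" where
  "vlt fo u v \<longleftrightarrow> (\<exists>i. u$i \<noteq> v$i \<and> (\<forall>j<i. u$j = v$j) \<and> fo (u$i) < fo (v$i))"

definition llt :: "('b \<Rightarrow> 'b \<Rightarrow> bool) \<Rightarrow> 'b list \<Rightarrow> 'b list \<Rightarrow> bool" where
  "llt lt xs ys \<longleftrightarrow> (\<exists>i. i < length xs \<and> i < length ys \<and> xs!i \<noteq> ys!i \<and>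
      (\<forall>j<i. xs!j = ys!j) \<and> lt (xs!i) (ys!i))"

definition is_rref :: "('a::field^('n::{finite,linorder})) list \<Rightarrow> bool" where
  "is_rref rs \<longleftrightarrow> (\<exists>p :: nat \<Rightarrow> 'n.
      (\<forall>i j. i < j \<and> j < length rs \<longrightarrow> p i < p j) \<and>
      (\<forall>i<length rs. (rs!i)$(p i) = 1 \<and> (\<forall>c<p i. (rs!i)$c = 0) \<and>
         (\<forall>i'<length rs. i' \<noteq> i \<longrightarrow> (rs!i')$(p i) = 0)))"

text \<open>Reduced generator (u_1, ..., u_k) of a subspace U: the rows u_k, ..., u_1 of the
reduced row echelon generator matrix of U, read from bottom to top.\<close>
definition red_gen :: "('a::field^('n::{finite,linorder})) set \<Rightarrow> ('a^('n::{finite,linorder})) list" where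
  "red_gen U = rev (THE rs. is_rref rs \<and> vec.span (set rs) = U)"

definition sub_lt :: "('a::{finite,field} \<Rightarrow> nat) \<Rightarrow> ('a^('n::{finite,linorder})) set \<Rightarrow> ('a^('n::{finite,linorder})) set \<Rightarrow> bool" where
  "sub_lt fo U V \<longleftrightarrow> llt (vlt fo) (red_gen U) (red_gen V)"

definition vmin :: "('a \<Rightarrow> nat) \<Rightarrow> ('a^('n::{finite,linorder})) set \<Rightarrow> 'a^('n::{finite,linorder})" where
  "vmin fo S = (THE v. v \<in> S \<and> (\<forall>w\<in>S. w \<noteq> v \<longrightarrow> vlt fo v w))"

definition qmatroid :: "(('a::{finite,field}^('n::{finite,linorder})) set \<Rightarrow> nat) \<Rightarrow> bool" where
  "qmatroid \<rho> \<longleftrightarrow>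
     (\<forall>X. vec.subspace X \<longrightarrow> \<rho> X \<le> vec.dim X) \<and>
     (\<forall>X Y. vec.subspace X \<and> vec.subspace Y \<and> X \<subseteq> Y \<longrightarrow> \<rho> X \<le> \<rho> Y) \<and>
     (\<forall>X Y. vec.subspace X \<and> vec.subspace Y \<longrightarrow>
        \<rho> {x + y | x y. x \<in> X \<and> y \<in> Y} + \<rho> (X \<inter> Y) \<le> \<rho> X + \<rho> Y)"

definition qrank :: "(('a::field^('n::{finite,linorder})) set \<Rightarrow> nat) \<Rightarrow> nat" where
  "qrank \<rho> = \<rho> UNIV"

definition indep :: "(('a::field^('n::{finite,linorder})) set \<Rightarrow> nat) \<Rightarrow> ('a^('n::{finite,linorder})) set \<Rightarrow> bool" where
  "indep \<rho> U \<longleftrightarrow> vec.subspace U \<and> \<rho> U = vec.dim U"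

definition qbasis :: "(('a::field^('n::{finite,linorder})) set \<Rightarrow> nat) \<Rightarrow> ('a^('n::{finite,linorder})) set \<Rightarrow> bool" where
  "qbasis \<rho> B \<longleftrightarrow> indep \<rho> B \<and> (\<forall>U. indep \<rho> U \<and> B \<subseteq> U \<longrightarrow> U = B)"

text \<open>Facets of the order complex: chains A_1 < ... < A_r of independent subspaces
with dim A_m = m, represented as the list [A_1, ..., A_r] (so A_m = A!(m-1)).\<close>
definition facet :: "(('a::field^('n::{finite,linorder})) set \<Rightarrow> nat) \<Rightarrow> ('a^('n::{finite,linorder})) set list \<Rightarrow> bool" where
  "facet \<rho> A \<longleftrightarrow> length A = qrank \<rho> \<and>
     (\<forall>m<length A. indep \<rho> (A!m) \<and> vec.dim (A!m) = Suc m) \<and>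
     (\<forall>m. Suc m < length A \<longrightarrow> A!m \<subset> A!(Suc m))"

definition facet_lt :: "('a::{finite,field} \<Rightarrow> nat) \<Rightarrow> ('a^('n::{finite,linorder})) set list \<Rightarrow> ('a^('n::{finite,linorder})) set list \<Rightarrow> bool" where
  "facet_lt fo U V \<longleftrightarrow> (\<exists>e. e < length U \<and> e < length V \<and> U!e \<noteq> V!e \<and>
      (\<forall>e'. e < e' \<and> e' < length U \<longrightarrow> U!e' = V!e') \<and> sub_lt fo (U!e) (V!e))"

definition restr :: "('a::{finite,field} \<Rightarrow> nat) \<Rightarrow> (('a^('n::{finite,linorder})) set \<Rightarrow> nat) \<Rightarrow>
    ('a^('n::{finite,linorder})) set list \<Rightarrow> ('a^('n::{finite,linorder})) set set" where
  "restr fo \<rho> A = {A!m | m. m < length A \<and>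
      (\<exists>B. facet \<rho> B \<and> facet_lt fo B A \<and> set A - {A!m} \<subseteq> set B)}"

end

theory Submission
  imports Defs
begin

text \<open>The reduced generator of a subspace \<open>U\<close> starts with the least nonzero vector of \<open>U\<close>
  (the last row of its reduced row echelon form), so two subspaces with different least
  vectors compare like those vectors. Call a flag \<open>A\<^sub>1 \<subset> \<dots> \<subset> A\<^sub>r\<close> fresh if the least nonzero vector
  of each \<open>A\<^sub>m\<^sub>+\<^sub>1\<close> lies outside \<open>A\<^sub>m\<close>. Freshness at \<open>m + 1\<close> puts \<open>A\<^sub>m\<close> into \<open>\<R>(A)\<close>
  (replace it by \<open>A\<^sub>m\<^sub>-\<^sub>1\<close> plus that vector), and conversely a facet with \<open>\<R>(A) = A\<close> is fresh.
  The top vertex \<open>A\<^sub>r\<close> lies in \<open>\<R>(A)\<close> iff some basis \<open>F \<supseteq> A\<^sub>r\<^sub>-\<^sub>1\<close> precedes \<open>A\<^sub>r\<close>; then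
  \<open>F \<inter> A\<^sub>r = A\<^sub>r\<^sub>-\<^sub>1\<close>, and freshness says the least vector of \<open>A\<^sub>r\<close> is not in \<open>F\<close>. Conversely, given
  \<open>F\<close> and \<open>G\<close>, a fresh flag of \<open>F \<inter> G\<close>, built by repeatedly passing to a hyperplane that avoids the
  least vector, extended by \<open>G\<close> is a facet with \<open>\<R>(A) = A\<close>.\<close>

section \<open>Reduced row echelon forms\<close>

definition rref_pivots :: "('a::field^('n::{finite,linorder})) list \<Rightarrow> (nat \<Rightarrow> 'n) \<Rightarrow> bool" where
  "rref_pivots rs p \<longleftrightarrow> (\<forall>i j. i < j \<and> j < length rs \<longrightarrow> p i < p j) \<and>
      (\<forall>i<length rs. (rs!i)$(p i) = 1 \<and> (\<forall>c<p i. (rs!i)$c = 0) \<and>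
         (\<forall>i'<length rs. i' \<noteq> i \<longrightarrow> (rs!i')$(p i) = 0))"

lemma is_rref_iff_rref_pivots: "is_rref rs \<longleftrightarrow> (\<exists>p. rref_pivots rs p)"
  unfolding is_rref_def rref_pivots_def by blast

lemma rref_pivotsD:
  assumes "rref_pivots rs p"
  shows rref_pivots_mono: "\<And>i j. i < j \<Longrightarrow> j < length rs \<Longrightarrow> p i < p j"
    and rref_pivots_one: "\<And>i. i < length rs \<Longrightarrow> (rs!i)$(p i) = 1"
    and rref_pivots_before: "\<And>i c. i < length rs \<Longrightarrow> c < p i \<Longrightarrow> (rs!i)$c = 0"
    and rref_pivots_column: "\<And>i i'. i < length rs \<Longrightarrow> i' < length rs \<Longrightarrow> i' \<noteq> i \<Longrightarrow> (rs!i')$(p i) = 0"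
  using assms unfolding rref_pivots_def by blast+

lemma rref_span_expansion:
  assumes p: "rref_pivots rs p" and u: "u \<in> vec.span (set rs)"
  shows "u = (\<Sum>j<length rs. (u$(p j)) *s rs!j)"
  using u
proof (induction rule: vec.span_induct)
  case base
  define E where "E u = (\<Sum>j<length rs. (u$(p j)) *s rs!j)" for u
  have "E (x + y) = E x + E y" for x y
    unfolding E_def by (simp add: sum.distrib vector_sadd_rdistrib)
  moreover have "E (c *s x) = c *s E x" for c x
    unfolding E_def by (simp add: vec.scale_sum_right vector_smult_assoc)
  moreover have "E 0 = 0" unfolding E_def by simp
  ultimately have "vec.subspace {u. u = E u}" unfolding vec.subspace_def by auto
  then show ?case unfolding E_def .
next
  case (step x)
  then obtain i where i: "i < length rs" "x = rs!i" by (auto simp: in_set_conv_nth)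
  have "(\<Sum>j<length rs. (x$(p j)) *s rs!j) = (\<Sum>j<length rs. if j = i then rs!i else 0)"
    using rref_pivotsD[OF p] i by (intro sum.cong) auto
  then show ?case using i by simp
qed

lemma rref_leading_pivot:
  assumes p: "rref_pivots rs p" and u: "u \<in> vec.span (set rs)" "u \<noteq> 0"
  obtains j0 where "j0 < length rs" "u$(p j0) \<noteq> 0" "\<forall>j<j0. u$(p j) = 0" "\<forall>c<p j0. u$c = 0"
proof -
  have "\<exists>j. j < length rs \<and> u$(p j) \<noteq> 0"
  proof (rule ccontr)
    assume "\<not> ?thesis"
    then have "u = 0" using rref_span_expansion[OF p u(1)] by simp
    with u(2) show False by simp
  qed
  then obtain j0 where j0: "j0 < length rs" "u$(p j0) \<noteq> 0"
    and "\<forall>j<j0. \<not> (j < length rs \<and> u$(p j) \<noteq> 0)"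
    unfolding exists_least_iff[of "\<lambda>j. j < length rs \<and> u$(p j) \<noteq> 0"] by blast
  then have less: "\<forall>j<j0. u$(p j) = 0" by auto
  have "u$c = 0" if c: "c < p j0" for c
  proof -
    have "u$c = (\<Sum>j<length rs. u$(p j) * (rs!j)$c)"
      by (subst rref_span_expansion[OF p u(1)]) simp
    also have "\<dots> = 0"
    proof (intro sum.neutral ballI)
      fix j assume j: "j \<in> {..<length rs}"
      show "u$(p j) * (rs!j)$c = 0"
      proof (cases "j < j0")
        case False
        then have "p j0 \<le> p j" using rref_pivots_mono[OF p, of j0 j] j by (cases "j = j0") auto
        then show ?thesis using rref_pivots_before[OF p, of j c] j c by simp
      qed (use less in simp)
    qed
    finally show ?thesis .
  qed
  then show ?thesis using that j0 less by blast
qed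

lemma rref_pivot_mem:
  assumes p: "rref_pivots rs p" and p': "rref_pivots rs' p'"
    and sp: "vec.span (set rs') \<subseteq> vec.span (set rs)" and i: "i < length rs'"
  shows "\<exists>j<length rs. p' i = p j"
proof -
  have u: "rs'!i \<in> vec.span (set rs)" using sp vec.span_base[OF nth_mem[OF i]] by blast
  have u1: "(rs'!i)$(p' i) = 1" using rref_pivots_one[OF p' i] .
  then have nz: "rs'!i \<noteq> 0" by auto
  obtain j0 where j0: "j0 < length rs" "(rs'!i)$(p j0) \<noteq> 0" "\<forall>j<j0. (rs'!i)$(p j) = 0"
      "\<forall>c<p j0. (rs'!i)$c = 0"
    by (rule rref_leading_pivot[OF p u nz])
  have "p' i = p j0"
  proof (rule linorder_cases[of "p' i" "p j0"])
    assume "p' i < p j0"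
    then show ?thesis using j0(4) u1 by simp
  next
    assume "p j0 < p' i"
    then show ?thesis using rref_pivots_before[OF p' i] j0(2) by simp
  qed
  then show ?thesis using j0(1) by blast
qed

lemma rref_unique:
  assumes p: "rref_pivots rs p" and p': "rref_pivots rs' p'"
    and sp: "vec.span (set rs') = vec.span (set rs)"
  shows "rs = rs'"
proof -
  have sorted: "sorted_wrt (<) (map p [0..<length rs])" "sorted_wrt (<) (map p' [0..<length rs'])"
    using rref_pivots_mono[OF p] rref_pivots_mono[OF p'] by (auto simp: sorted_wrt_iff_nth_less)
  have "set (map p [0..<length rs]) = set (map p' [0..<length rs'])"
    using rref_pivot_mem[OF p' p] rref_pivot_mem[OF p p'] sp by fastforce
  then have eq: "map p [0..<length rs] = map p' [0..<length rs']"
    using sorted by (metis sorted_distinct_set_unique strict_sorted_iff)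
  then have len: "length rs = length rs'" by (metis length_map length_upt diff_zero)
  have pp: "p j = p' j" if "j < length rs" for j
    using that len arg_cong[OF eq, of "\<lambda>xs. xs ! j"] by simp
  show ?thesis
  proof (rule nth_equalityI[OF len])
    fix i assume i: "i < length rs"
    have u: "rs'!i \<in> vec.span (set rs)" using sp i len by (metis nth_mem vec.span_base)
    have "rs'!i = (\<Sum>j<length rs. ((rs'!i)$(p j)) *s rs!j)" by (rule rref_span_expansion[OF p u])
    also have "\<dots> = (\<Sum>j<length rs. if j = i then rs!i else 0)"
      using pp i len rref_pivotsD[OF p'] by (intro sum.cong) auto
    finally show "rs!i = rs'!i" using i by simp
  qed
qed

text \<open>For the existence of reduced row echelon forms the rows are indexed by their pivot
  columns; this avoids shifting row indices when a new row is inserted.\<close>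

definition echelon_rows :: "'n set \<Rightarrow> ('n \<Rightarrow> 'a::field^('n::{finite,linorder})) \<Rightarrow> bool" where
  "echelon_rows P e \<longleftrightarrow> (\<forall>c\<in>P. e c $ c = 1 \<and> (\<forall>c'<c. e c $ c' = 0) \<and>
      (\<forall>c'\<in>P. c' \<noteq> c \<longrightarrow> e c' $ c = 0))"

lemma echelon_rowsD:
  assumes "echelon_rows P e" "c \<in> P"
  shows echelon_rows_one: "e c $ c = 1"
    and echelon_rows_before: "\<And>c'. c' < c \<Longrightarrow> e c $ c' = 0"
    and echelon_rows_column: "\<And>c'. c' \<in> P \<Longrightarrow> c' \<noteq> c \<Longrightarrow> e c' $ c = 0"
  using assms unfolding echelon_rows_def by simp_all

lemma rref_pivots_echelon_rows:
  assumes P: "echelon_rows P e"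
  shows "rref_pivots (map e (sorted_list_of_set P)) ((!) (sorted_list_of_set P))"
proof -
  let ?cs = "sorted_list_of_set P"
  have cs: "sorted_wrt (<) ?cs" "distinct ?cs" "set ?cs = P"
    by (simp_all add: strict_sorted_list_of_set)
  have mono: "?cs ! i < ?cs ! j" if "i < j" "j < length ?cs" for i j
    using that cs(1) sorted_wrt_iff_nth_less by blast
  have row: "e (?cs ! i) $ (?cs ! i) = 1 \<and> (\<forall>c<?cs ! i. e (?cs ! i) $ c = 0) \<and>
      (\<forall>i'<length ?cs. i' \<noteq> i \<longrightarrow> e (?cs ! i') $ (?cs ! i) = 0)" if i: "i < length ?cs" for i
  proof (intro conjI allI impI)
    have ci: "?cs ! i \<in> P" using i cs(3) nth_mem by blast
    show "e (?cs ! i) $ (?cs ! i) = 1" by (rule echelon_rows_one[OF P ci])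
    show "e (?cs ! i) $ c = 0" if "c < ?cs ! i" for c by (rule echelon_rows_before[OF P ci that])
    fix i' assume i': "i' < length ?cs" "i' \<noteq> i"
    have "?cs ! i' \<in> P" using i'(1) cs(3) nth_mem by blast
    moreover have "?cs ! i' \<noteq> ?cs ! i" using nth_eq_iff_index_eq[OF cs(2) i'(1) i] i'(2) by blast
    ultimately show "e (?cs ! i') $ (?cs ! i) = 0" by (rule echelon_rows_column[OF P ci])
  qed
  show ?thesis unfolding rref_pivots_def using mono row by auto
qed

lemma echelon_rows_insert:
  assumes P: "echelon_rows P e"
    and w: "w $ c = 1" "\<forall>c'<c. w $ c' = 0" "\<forall>c'\<in>P. w $ c' = 0"
  shows "echelon_rows (insert c P) (\<lambda>c'. if c' = c then w else e c' - (e c' $ c) *s w)"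
    (is "echelon_rows _ ?e")
  unfolding echelon_rows_def
proof (intro ballI conjI allI impI)
  fix c1 assume c1: "c1 \<in> insert c P"
  show "?e c1 $ c1 = 1"
  proof (cases "c1 = c")
    case False
    then show ?thesis using c1 w(3) echelon_rows_one[OF P] by simp
  qed (simp add: w(1))
  fix c2
  show "?e c1 $ c2 = 0" if "c2 < c1"
  proof (cases "c1 = c")
    case False
    then have c1P: "c1 \<in> P" using c1 by simp
    have "e c1 $ c = 0 \<or> w $ c2 = 0"
      using echelon_rows_before[OF P c1P] that w(2) False by (metis linorder_neqE order.strict_trans)
    then show ?thesis using echelon_rows_before[OF P c1P that] False by auto
  qed (use w(2) that in simp)
  show "?e c2 $ c1 = 0" if "c2 \<in> insert c P" "c2 \<noteq> c1"
  proof (cases "c1 = c")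
    case True
    then show ?thesis using that w(1) by simp
  next
    case False
    then have "c1 \<in> P" using c1 by simp
    then show ?thesis using that False w(3) echelon_rows_column[OF P] by auto
  qed
qed

lemma span_echelon_rows_insert:
  assumes "c \<notin> P"
  shows "vec.span ((\<lambda>c'. if c' = c then w else e c' - (e c' $ c) *s w) ` insert c P)
    = vec.span (insert w (e ` P))" (is "vec.span (?e ` _) = vec.span ?R")
proof -
  have in_new: "?e c1 \<in> vec.span (?e ` insert c P)" if "c1 \<in> insert c P" for c1
    using that by (intro vec.span_base imageI)
  have "e c1 \<in> vec.span (?e ` insert c P)" if "c1 \<in> P" for c1
  proof -
    have "?e c1 + (e c1 $ c) *s ?e c \<in> vec.span (?e ` insert c P)"
      using that by (intro vec.span_add vec.span_scale in_new) auto
    moreover have "?e c1 + (e c1 $ c) *s ?e c = e c1" using that assms by auto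
    ultimately show ?thesis by simp
  qed
  moreover have "w \<in> vec.span (?e ` insert c P)" using in_new[of c] by simp
  moreover have "?e c1 \<in> vec.span ?R" if "c1 \<in> insert c P" for c1
  proof (cases "c1 = c")
    case False
    then have "e c1 \<in> vec.span ?R" "w \<in> vec.span ?R" using that by (auto intro: vec.span_base)
    then show ?thesis by (simp add: vec.span_diff vec.span_scale)
  qed (auto intro: vec.span_base)
  ultimately show ?thesis unfolding vec.span_eq by blast
qed

lemma span_insert_swap:
  assumes "v \<in> vec.span (insert w S)" "w \<in> vec.span (insert v S)"
  shows "vec.span (insert v S) = vec.span (insert w S)"
  unfolding vec.span_eq insert_subset
  using assms vec.span_superset[of "insert v S"] vec.span_superset[of "insert w S"] by blast

lemma span_insert_scale:
  assumes "a \<noteq> 0"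
  shows "vec.span (insert (a *s w) S) = vec.span (insert w S)"
proof (rule span_insert_swap)
  have "w = inverse a *s (a *s w)" using assms by (simp add: vector_smult_assoc)
  then show "w \<in> vec.span (insert (a *s w) S)" by (metis insertI1 vec.span_base vec.span_scale)
qed (intro vec.span_scale vec.span_base insertI1)

lemma echelon_rows_reduce:
  fixes v :: "'a::field^('n::{finite,linorder})"
  assumes P: "echelon_rows P e"
  defines "w \<equiv> v - (\<Sum>c\<in>P. v $ c *s e c)"
  shows "\<forall>c\<in>P. w $ c = 0" and "vec.span (insert w (e ` P)) = vec.span (insert v (e ` P))"
proof -
  have "(\<Sum>c'\<in>P. v $ c' *s e c') $ c = v $ c" if "c \<in> P" for c
  proof -
    have "(\<Sum>c'\<in>P. v $ c' *s e c') $ c = (\<Sum>c'\<in>P. v $ c' * e c' $ c)" by simp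
    also have "\<dots> = (\<Sum>c'\<in>P. if c' = c then v $ c else 0)"
      using P that by (intro sum.cong) (auto simp: echelon_rows_def)
    finally show ?thesis using that by simp
  qed
  then show "\<forall>c\<in>P. w $ c = 0" unfolding w_def by simp
  define s where "s = (\<Sum>c\<in>P. v $ c *s e c)"
  have "s \<in> vec.span (e ` P)" unfolding s_def by (intro vec.span_sum vec.span_scale vec.span_base) simp
  then have s: "s \<in> vec.span (insert x (e ` P))" for x using vec.span_mono[of "e ` P"] by blast
  have "w + s \<in> vec.span (insert w (e ` P))" by (intro vec.span_add vec.span_base s) simp
  moreover have "v - s \<in> vec.span (insert v (e ` P))" by (intro vec.span_diff vec.span_base s) simp
  ultimately show "vec.span (insert w (e ` P)) = vec.span (insert v (e ` P))"
    unfolding w_def s_def by (intro span_insert_swap) simp_all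
qed

text \<open>Gaussian elimination of one new vector: reduce it at the existing pivots, normalise it at
  its leading nonzero position \<open>c\<close>, and clear column \<open>c\<close> in the other rows.\<close>

lemma echelon_rows_extend:
  fixes v :: "'a::field^('n::{finite,linorder})"
  assumes P: "echelon_rows P e"
  shows "\<exists>P' e'. echelon_rows P' e' \<and> vec.span (e' ` P') = vec.span (insert v (e ` P))"
proof -
  define w where "w = v - (\<Sum>c\<in>P. v $ c *s e c)"
  have wP: "\<forall>c\<in>P. w $ c = 0" and span_w: "vec.span (insert w (e ` P)) = vec.span (insert v (e ` P))"
    using echelon_rows_reduce[OF P, of v] unfolding w_def by blast+
  show ?thesis
  proof (cases "w = 0")
    case True
    then show ?thesis using P span_w by auto
  next
    case False
    then obtain c0 where "w $ c0 \<noteq> 0" by (auto simp: vec_eq_iff)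
    define c where "c = Min {c. w $ c \<noteq> 0}"
    have wc: "w $ c \<noteq> 0" using Min_in[of "{c. w $ c \<noteq> 0}"] \<open>w $ c0 \<noteq> 0\<close> unfolding c_def by auto
    have before_c: "\<forall>c'<c. w $ c' = 0"
      using Min_le[of "{c. w $ c \<noteq> 0}"] unfolding c_def by (meson finite leD mem_Collect_eq)
    define w' where "w' = inverse (w $ c) *s w"
    have w': "w' $ c = 1" "\<forall>c'<c. w' $ c' = 0" "\<forall>c'\<in>P. w' $ c' = 0"
      using wc before_c wP unfolding w'_def by simp_all
    have "vec.span (insert w' (e ` P)) = vec.span (insert v (e ` P))"
      using span_insert_scale[of "inverse (w $ c)" w] wc span_w unfolding w'_def by simp
    moreover have "c \<notin> P" using w'(1,3) by force
    ultimately show ?thesis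
      using echelon_rows_insert[OF P w'] span_echelon_rows_insert[of c P w' e] by (intro exI conjI) auto
  qed
qed

lemma echelon_rows_exists:
  fixes S :: "('a::field^('n::{finite,linorder})) set"
  assumes "finite S"
  shows "\<exists>P e. echelon_rows P e \<and> vec.span (e ` P) = vec.span S"
  using assms
proof (induction rule: finite_induct)
  case empty
  show ?case by (rule exI[of _ "{}"]) (simp add: echelon_rows_def)
next
  case (insert v S)
  then obtain P e where "echelon_rows P e" "vec.span (e ` P) = vec.span S" by blast
  then show ?case using echelon_rows_extend[of P e v] by (simp add: vec.span_insert)
qed

lemma rref_exists:
  fixes U :: "('a::field^('n::{finite,linorder})) set"
  assumes "vec.subspace U"
  obtains rs p where "rref_pivots rs p" "vec.span (set rs) = U"
proof -
  obtain B where B: "B \<subseteq> U" "vec.independent B" "U \<subseteq> vec.span B"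
    by (rule vec.maximal_independent_subset)
  have "vec.span B = U" by (rule vec.span_subspace[OF B(1,3) assms])
  moreover obtain P e where P: "echelon_rows P e" "vec.span (e ` P) = vec.span B"
    using echelon_rows_exists[OF vec.finiteI_independent[OF B(2)]] by blast
  moreover have "set (map e (sorted_list_of_set P)) = e ` P" by simp
  ultimately show ?thesis using that[OF rref_pivots_echelon_rows[OF P(1)]] P(2) by simp
qed

lemma red_gen_rref:
  fixes U :: "('a::field^('n::{finite,linorder})) set"
  assumes "vec.subspace U"
  obtains rs p where "rref_pivots rs p" "vec.span (set rs) = U" "red_gen U = rev rs"
proof -
  obtain rs p where rs: "rref_pivots rs p" "vec.span (set rs) = U"
    using rref_exists[OF assms] .
  have "(THE rs. is_rref rs \<and> vec.span (set rs) = U) = rs"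
  proof (rule the_equality)
    show "is_rref rs \<and> vec.span (set rs) = U" using rs by (auto simp: is_rref_iff_rref_pivots)
  next
    fix rs' assume "is_rref rs' \<and> vec.span (set rs') = U"
    then show "rs' = rs" using rref_unique[OF rs(1)] rs(2) by (auto simp: is_rref_iff_rref_pivots)
  qed
  then show ?thesis using that[OF rs] unfolding red_gen_def by simp
qed

section \<open>Least nonzero vectors of subspaces\<close>

lemma field_order_zero_less:
  assumes "field_order fo" "(a::'a::{finite,field}) \<noteq> 0"
  shows "fo 0 < fo a"
  using assms unfolding field_order_def by (metis less_trans)

lemma vlt_asym: "vlt fo u v \<Longrightarrow> \<not> vlt fo v u"
  unfolding vlt_def by (metis linorder_neqE not_less_iff_gr_or_eq)

lemma vmin_eqI:
  assumes "v \<in> S" "\<forall>w\<in>S. w \<noteq> v \<longrightarrow> vlt fo v w"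
  shows "vmin fo S = v"
  unfolding vmin_def
proof (rule the_equality)
  show "v \<in> S \<and> (\<forall>w\<in>S. w \<noteq> v \<longrightarrow> vlt fo v w)" using assms by blast
next
  fix v' assume v': "v' \<in> S \<and> (\<forall>w\<in>S. w \<noteq> v' \<longrightarrow> vlt fo v' w)"
  show "v' = v"
  proof (rule ccontr)
    assume "v' \<noteq> v"
    then have "vlt fo v' v" "vlt fo v v'" using assms v' by auto
    then show False using vlt_asym by blast
  qed
qed

text \<open>A vector whose leading pivot precedes the last one is larger than the last row at that
  pivot, where the last row vanishes; a multiple \<open>a *s last rs\<close> with \<open>a \<noteq> 1\<close> is larger at the
  last pivot, because \<open>fo 1\<close> is the least value of \<open>fo\<close> on nonzero scalars.\<close>

lemma rref_last_least:
  fixes rs :: "('a::{finite,field}^('n::{finite,linorder})) list"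
  assumes fo: "field_order fo" and p: "rref_pivots rs p" and ne: "rs \<noteq> []"
    and u: "u \<in> vec.span (set rs)" "u \<noteq> 0" "u \<noteq> last rs"
  shows "vlt fo (last rs) u"
proof -
  define k where "k = length rs - 1"
  have k: "k < length rs" "last rs = rs!k" using ne unfolding k_def by (auto simp: last_conv_nth)
  obtain j0 where j0: "j0 < length rs" "u$(p j0) \<noteq> 0" "\<forall>j<j0. u$(p j) = 0" "\<forall>c<p j0. u$c = 0"
    by (rule rref_leading_pivot[OF p u(1,2)])
  show ?thesis
  proof (cases "j0 < k")
    case True
    have "(last rs)$(p j0) = 0" using rref_pivots_column[OF p j0(1) k(1)] True k(2) by simp
    moreover have "\<forall>c<p j0. (last rs)$c = 0"
      using rref_pivots_before[OF p k(1)] rref_pivots_mono[OF p True k(1)] k(2) by simp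
    ultimately show ?thesis unfolding vlt_def
      using j0(2,4) field_order_zero_less[OF fo j0(2)] by (intro exI[of _ "p j0"]) auto
  next
    case False
    then have jk: "j0 = k" using j0(1) unfolding k_def by simp
    define a where "a = u$(p k)"
    have "u = (\<Sum>j<length rs. (u$(p j)) *s rs!j)" by (rule rref_span_expansion[OF p u(1)])
    also have "\<dots> = (\<Sum>j<length rs. if j = k then a *s rs!k else 0)"
      using j0(3) jk k unfolding a_def by (intro sum.cong) (auto simp: k_def)
    finally have ua: "u = a *s last rs" using k by simp
    have "a \<noteq> 0" "a \<noteq> 1" using j0(2) jk ua u(3) unfolding a_def by auto
    then have "fo 1 < fo a" using fo unfolding field_order_def by blast
    moreover have "(last rs)$(p k) = 1" "\<forall>c<p k. (last rs)$c = 0"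
      using rref_pivots_one[OF p k(1)] rref_pivots_before[OF p k(1)] k(2) by simp_all
    ultimately show ?thesis unfolding vlt_def
      using ua \<open>a \<noteq> 1\<close> by (intro exI[of _ "p k"]) auto
  qed
qed

lemma red_gen_vmin:
  fixes U :: "('a::{finite,field}^('n::{finite,linorder})) set"
  assumes fo: "field_order fo" and U: "vec.subspace U" "U \<noteq> {0}"
  shows "red_gen U \<noteq> []" and "hd (red_gen U) \<in> U - {0}"
    and "\<And>w. w \<in> U - {0} \<Longrightarrow> w \<noteq> hd (red_gen U) \<Longrightarrow> vlt fo (hd (red_gen U)) w"
    and "vmin fo (U - {0}) = hd (red_gen U)"
proof -
  obtain rs p where rs: "rref_pivots rs p" "vec.span (set rs) = U" "red_gen U = rev rs"
    by (rule red_gen_rref[OF U(1)])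
  have ne: "rs \<noteq> []" using rs(2) U(2) by auto
  then show "red_gen U \<noteq> []" using rs(3) by simp
  have hd: "hd (red_gen U) = last rs" using rs(3) ne by (simp add: hd_rev)
  have "last rs \<in> U" using rs(2) ne by (metis last_in_set vec.span_base)
  moreover have "last rs \<noteq> 0"
    using rref_pivots_one[OF rs(1), of "length rs - 1"] ne by (auto simp: last_conv_nth)
  ultimately show mem: "hd (red_gen U) \<in> U - {0}" using hd by simp
  show least: "\<And>w. w \<in> U - {0} \<Longrightarrow> w \<noteq> hd (red_gen U) \<Longrightarrow> vlt fo (hd (red_gen U)) w"
    using rref_last_least[OF fo rs(1) ne] rs(2) hd by simp
  show "vmin fo (U - {0}) = hd (red_gen U)" using mem least by (intro vmin_eqI) auto
qed

lemma vmin_subspace: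
  fixes U :: "('a::{finite,field}^('n::{finite,linorder})) set"
  assumes "field_order fo" "vec.subspace U" "U \<noteq> {0}"
  shows vmin_subspace_mem: "vmin fo (U - {0}) \<in> U"
    and vmin_subspace_nonzero: "vmin fo (U - {0}) \<noteq> 0"
    and vmin_subspace_least:
      "\<And>w. w \<in> U \<Longrightarrow> w \<noteq> 0 \<Longrightarrow> w \<noteq> vmin fo (U - {0}) \<Longrightarrow> vlt fo (vmin fo (U - {0})) w"
  using red_gen_vmin[OF assms] by auto

lemma vmin_eq_of_subspace:
  fixes S G :: "('a::{finite,field}^('n::{finite,linorder})) set"
  assumes fo: "field_order fo" and G: "vec.subspace G" "G \<noteq> {0}"
    and "S \<subseteq> G" "vmin fo (G - {0}) \<in> S"
  shows "vmin fo (S - {0}) = vmin fo (G - {0})"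
  using assms vmin_subspace[OF fo G] by (intro vmin_eqI) auto

lemma sub_lt_neq: "sub_lt fo U V \<Longrightarrow> U \<noteq> V"
  unfolding sub_lt_def llt_def by auto

lemma sub_lt_iff_vlt_vmin:
  fixes U V :: "('a::{finite,field}^('n::{finite,linorder})) set"
  assumes fo: "field_order fo" and U: "vec.subspace U" "U \<noteq> {0}"
    and V: "vec.subspace V" "V \<noteq> {0}" and ne: "vmin fo (U - {0}) \<noteq> vmin fo (V - {0})"
  shows "sub_lt fo U V \<longleftrightarrow> vlt fo (vmin fo (U - {0})) (vmin fo (V - {0}))"
proof -
  have U': "red_gen U \<noteq> []" "vmin fo (U - {0}) = red_gen U ! 0"
    using red_gen_vmin[OF fo U] by (simp_all add: hd_conv_nth)
  have V': "red_gen V \<noteq> []" "vmin fo (V - {0}) = red_gen V ! 0"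
    using red_gen_vmin[OF fo V] by (simp_all add: hd_conv_nth)
  show ?thesis
  proof
    assume "sub_lt fo U V"
    then obtain i where i: "i < length (red_gen U)" "i < length (red_gen V)"
        "\<forall>j<i. red_gen U ! j = red_gen V ! j" "vlt fo (red_gen U ! i) (red_gen V ! i)"
      unfolding sub_lt_def llt_def by blast
    have "i = 0" using i(3) ne U'(2) V'(2) by (metis neq0_conv)
    then show "vlt fo (vmin fo (U - {0})) (vmin fo (V - {0}))" using i(4) U'(2) V'(2) by simp
  next
    assume "vlt fo (vmin fo (U - {0})) (vmin fo (V - {0}))"
    then show "sub_lt fo U V" unfolding sub_lt_def llt_def using U' V' ne
      by (intro exI[of _ 0]) auto
  qed
qed

lemma sub_lt_asym: "sub_lt fo U V \<Longrightarrow> \<not> sub_lt fo V U"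
proof
  assume "sub_lt fo U V" "sub_lt fo V U"
  then obtain i i' where i: "red_gen U ! i \<noteq> red_gen V ! i" "\<forall>j<i. red_gen U ! j = red_gen V ! j"
      "vlt fo (red_gen U ! i) (red_gen V ! i)"
    and i': "red_gen V ! i' \<noteq> red_gen U ! i'" "\<forall>j<i'. red_gen V ! j = red_gen U ! j"
      "vlt fo (red_gen V ! i') (red_gen U ! i')"
    unfolding sub_lt_def llt_def by blast
  show False
  proof (rule linorder_cases[of i i'])
    assume "i < i'" then show False using i(1) i'(2) by simp
  next
    assume "i = i'" then show False using i(3) i'(3) vlt_asym by blast
  next
    assume "i' < i" then show False using i(2) i'(1) by simp
  qed
qed

lemma sub_lt_of_vmin_mem:
  fixes N S X :: "('a::{finite,field}^('n::{finite,linorder})) set"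
  assumes fo: "field_order fo" and N: "vec.subspace N" "N \<noteq> {0}"
    and S: "vec.subspace S" "S \<subseteq> N" "vmin fo (N - {0}) \<in> S"
    and X: "vec.subspace X" "X \<noteq> {0}" "X \<subseteq> N" "vmin fo (N - {0}) \<notin> X"
  shows "sub_lt fo S X"
proof -
  have vS: "vmin fo (S - {0}) = vmin fo (N - {0})" by (rule vmin_eq_of_subspace[OF fo N S(2,3)])
  have "S \<noteq> {0}" using S(3) vmin_subspace_nonzero[OF fo N] by auto
  moreover have vX: "vmin fo (X - {0}) \<noteq> vmin fo (N - {0})"
    using vmin_subspace_mem[OF fo X(1,2)] X(4) by auto
  moreover have "vlt fo (vmin fo (N - {0})) (vmin fo (X - {0}))"
    using vmin_subspace_least[OF fo N] vmin_subspace[OF fo X(1,2)] X(3) vX by auto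
  ultimately show ?thesis using sub_lt_iff_vlt_vmin[OF fo S(1) _ X(1,2)] vS by simp
qed

section \<open>Subspaces and q-matroids\<close>

lemma span_of_subspace: "vec.subspace X \<Longrightarrow> vec.span X = X"
  by (simp add: vec.span_eq_iff)

lemma dim_span_insert:
  fixes X :: "('a::field^('n::{finite,linorder})) set"
  assumes "vec.subspace X" "v \<notin> X"
  shows "vec.dim (vec.span (insert v X)) = Suc (vec.dim X)"
  using assms vec.dim_insert[of v X] by (simp add: span_of_subspace)

lemma span_insert_eq_subspace:
  fixes P X :: "('a::field^('n::{finite,linorder})) set"
  assumes "vec.subspace P" "vec.subspace X" "P \<subseteq> X" "vec.dim X = Suc (vec.dim P)"
    and "v \<in> X" "v \<notin> P"
  shows "vec.span (insert v P) = X"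
proof (rule vec.subspace_dim_equal)
  show "vec.span (insert v P) \<subseteq> X" using assms by (simp add: vec.span_minimal)
  show "vec.dim X \<le> vec.dim (vec.span (insert v P))"
    using assms vec.dim_insert[of v P] by (simp add: span_of_subspace)
qed (use assms in auto)

lemma inter_eq_common_hyperplane:
  fixes F G H :: "('a::field^('n::{finite,linorder})) set"
  assumes F: "vec.subspace F" "vec.dim F = Suc d" and G: "vec.subspace G" "vec.dim G = Suc d"
    and "F \<noteq> G" and H: "vec.subspace H" "vec.dim H = d" "H \<subseteq> F \<inter> G"
  shows "F \<inter> G = H"
proof -
  have FG: "vec.subspace (F \<inter> G)" using F G by (simp add: vec.subspace_inter)
  have "\<not> Suc d \<le> vec.dim (F \<inter> G)"
  proof
    assume "Suc d \<le> vec.dim (F \<inter> G)"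
    then have "F \<inter> G = F" "F \<inter> G = G" using vec.subspace_dim_equal[OF FG] F G by auto
    then show False using \<open>F \<noteq> G\<close> by simp
  qed
  then show ?thesis using vec.subspace_dim_equal[OF H(1) FG H(3)] H(2) by simp
qed

lemma subspace_insert_induct:
  fixes X Y :: "('a::field^('n::{finite,linorder})) set"
  assumes "vec.subspace X" "vec.subspace Y" "X \<subseteq> Y" "P X"
    and step: "\<And>Z v. vec.subspace Z \<Longrightarrow> Z \<subseteq> Y \<Longrightarrow> P Z \<Longrightarrow> v \<in> Y \<Longrightarrow> v \<notin> Z \<Longrightarrow>
      P (vec.span (insert v Z))"
  shows "P Y"
proof -
  have "P Y" if "vec.dim Y - vec.dim Z = d" "vec.subspace Z" "Z \<subseteq> Y" "P Z" for d Z
    using that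
  proof (induction d arbitrary: Z)
    case 0
    then have "Z = Y" using vec.subspace_dim_equal[of Z Y] assms(2) by simp
    then show ?case using 0 by simp
  next
    case (Suc d)
    then have "Z \<noteq> Y" by auto
    then obtain v where v: "v \<in> Y" "v \<notin> Z" using Suc.prems(3) by blast
    have "vec.span (insert v Z) \<subseteq> Y" using v Suc.prems assms(2) by (simp add: vec.span_minimal)
    moreover have "vec.dim (vec.span (insert v Z)) = Suc (vec.dim Z)"
      using dim_span_insert Suc.prems v by blast
    ultimately show ?case
      using Suc.IH[of "vec.span (insert v Z)"] Suc.prems(1) step[OF Suc.prems(2,3,4) v] by simp
  qed
  then show ?thesis using assms by blast
qed

lemma exists_hyperplane_avoiding:
  fixes W :: "('a::field^('n::{finite,linorder})) set"
  assumes W: "vec.subspace W" "vec.dim W = Suc d" and m: "m \<in> W" "m \<noteq> 0"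
  obtains W' where "vec.subspace W'" "W' \<subseteq> W" "vec.dim W' = d" "m \<notin> W'"
proof -
  obtain B where B: "{m} \<subseteq> B" "B \<subseteq> W" "vec.independent B" "W \<subseteq> vec.span B"
    using vec.maximal_independent_subset_extend[of "{m}" W] m by auto
  have "card B = Suc d" using vec.basis_card_eq_dim[OF B(2,4,3)] W(2) by simp
  moreover have "finite B" "m \<in> B" using vec.finiteI_independent[OF B(3)] B(1) by auto
  moreover have "vec.independent (B - {m})" using vec.independent_mono[OF B(3)] by blast
  ultimately have "vec.dim (vec.span (B - {m})) = d"
    by (simp add: vec.dim_eq_card_independent)
  moreover have "vec.span (B - {m}) \<subseteq> W" using B(2) W(1) by (meson Diff_subset order_trans vec.span_minimal)
  moreover have "m \<notin> vec.span (B - {m})"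
    using B(3) \<open>m \<in> B\<close> vec.independent_insert[of m "B - {m}"] by (simp add: insert_absorb)
  ultimately show ?thesis using that[of "vec.span (B - {m})"] by simp
qed

lemma qmatroidD:
  fixes \<rho> :: "('a::{finite,field}^('n::{finite,linorder})) set \<Rightarrow> nat"
  assumes "qmatroid \<rho>"
  shows qmatroid_le_dim: "\<And>X. vec.subspace X \<Longrightarrow> \<rho> X \<le> vec.dim X"
    and qmatroid_mono: "\<And>X Y. vec.subspace X \<Longrightarrow> vec.subspace Y \<Longrightarrow> X \<subseteq> Y \<Longrightarrow> \<rho> X \<le> \<rho> Y"
    and qmatroid_submodular: "\<And>X Y. vec.subspace X \<Longrightarrow> vec.subspace Y \<Longrightarrow>
      \<rho> (vec.span (X \<union> Y)) + \<rho> (X \<inter> Y) \<le> \<rho> X + \<rho> Y"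
proof -
  show "\<And>X. vec.subspace X \<Longrightarrow> \<rho> X \<le> vec.dim X"
    and "\<And>X Y. vec.subspace X \<Longrightarrow> vec.subspace Y \<Longrightarrow> X \<subseteq> Y \<Longrightarrow> \<rho> X \<le> \<rho> Y"
    using assms unfolding qmatroid_def by blast+
  fix X Y :: "('a^('n::{finite,linorder})) set" assume XY: "vec.subspace X" "vec.subspace Y"
  have "\<rho> {x + y | x y. x \<in> X \<and> y \<in> Y} + \<rho> (X \<inter> Y) \<le> \<rho> X + \<rho> Y"
    using assms XY unfolding qmatroid_def by blast
  moreover have "{x + y | x y. x \<in> X \<and> y \<in> Y} = vec.span (X \<union> Y)"
    using XY by (simp add: vec.span_Un span_of_subspace)
  ultimately show "\<rho> (vec.span (X \<union> Y)) + \<rho> (X \<inter> Y) \<le> \<rho> X + \<rho> Y" by simp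
qed

lemma qmatroid_span_insert_le:
  assumes qm: "qmatroid \<rho>" and X: "vec.subspace X"
  shows "\<rho> (vec.span (insert v X)) \<le> Suc (\<rho> X)"
proof -
  have "vec.span (X \<union> vec.span {v}) = vec.span (insert v X)"
    unfolding vec.span_eq
    by (auto intro: vec.span_base vec.span_mono[THEN subsetD] simp: vec.span_superset[THEN subsetD])
  moreover have "\<rho> (vec.span {v}) \<le> 1"
    using qmatroid_le_dim[OF qm vec.subspace_span, of "{v}"] vec.dim_le_card[of "vec.span {v}" "{v}"]
    by simp
  ultimately show ?thesis using qmatroid_submodular[OF qm X, of "vec.span {v}"] by simp
qed

lemma qmatroid_rank_increment_le_dim:
  assumes qm: "qmatroid \<rho>" and XY: "vec.subspace X" "vec.subspace Y" "X \<subseteq> Y"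
  shows "\<rho> Y + vec.dim X \<le> \<rho> X + vec.dim Y"
proof (rule subspace_insert_induct[of X Y "\<lambda>Z. \<rho> Z + vec.dim X \<le> \<rho> X + vec.dim Z", OF XY])
  fix Z v assume "vec.subspace Z" "\<rho> Z + vec.dim X \<le> \<rho> X + vec.dim Z" "v \<notin> Z"
  then show "\<rho> (vec.span (insert v Z)) + vec.dim X \<le> \<rho> X + vec.dim (vec.span (insert v Z))"
    using qmatroid_span_insert_le[OF qm, of Z v] dim_span_insert[of Z v] by simp
qed simp

lemma indep_subspace:
  assumes qm: "qmatroid \<rho>" and Y: "indep \<rho> Y" and X: "vec.subspace X" "X \<subseteq> Y"
  shows "indep \<rho> X"
  using qmatroid_rank_increment_le_dim[OF qm X(1) _ X(2)] qmatroid_le_dim[OF qm X(1)] Y X(1)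
  unfolding indep_def by simp

text \<open>A rank that does not grow when a single vector is added to \<open>B\<close> does not grow at all
  above \<open>B\<close>: adding \<open>v\<close> to \<open>Z \<supseteq> B\<close> is controlled, via submodularity, by adding \<open>v\<close> to \<open>B\<close>.\<close>

lemma qmatroid_rank_const_above:
  assumes qm: "qmatroid \<rho>" and B: "vec.subspace B"
    and flat: "\<And>v. \<rho> (vec.span (insert v B)) = \<rho> B"
    and Z: "vec.subspace Z" "B \<subseteq> Z"
  shows "\<rho> Z = \<rho> B"
proof (rule subspace_insert_induct[of B Z "\<lambda>Z. B \<subseteq> Z \<and> \<rho> Z = \<rho> B", OF B Z, THEN conjunct2])
  fix Z v assume Z: "vec.subspace Z" "B \<subseteq> Z \<and> \<rho> Z = \<rho> B"
  let ?Z = "vec.span (insert v Z)" and ?B = "vec.span (insert v B)"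
  have BZ: "B \<subseteq> ?Z" "Z \<subseteq> ?Z" "?B \<subseteq> ?Z"
    using Z vec.span_superset[of "insert v Z"] vec.span_mono[of "insert v B" "insert v Z"] by auto
  have "vec.span (Z \<union> ?B) = ?Z"
    unfolding vec.span_eq using BZ vec.span_superset[of "Z \<union> ?B"] vec.span_base[of v "insert v B"]
    by auto
  then have "\<rho> ?Z + \<rho> (Z \<inter> ?B) \<le> \<rho> Z + \<rho> ?B"
    using qmatroid_submodular[OF qm Z(1) vec.subspace_span] by metis
  moreover have "\<rho> B \<le> \<rho> (Z \<inter> ?B)"
    using Z vec.span_superset[of "insert v B"]
    by (intro qmatroid_mono[OF qm B]) (auto simp: vec.subspace_inter)
  moreover have "\<rho> Z \<le> \<rho> ?Z" using qmatroid_mono[OF qm Z(1) vec.subspace_span BZ(2)] .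
  ultimately show "B \<subseteq> ?Z \<and> \<rho> ?Z = \<rho> B" using BZ(1) flat[of v] Z(2) by simp
qed simp

lemma qbasis_span_insert:
  assumes qm: "qmatroid \<rho>" and B: "qbasis \<rho> B"
  shows "\<rho> (vec.span (insert v B)) = \<rho> B"
proof (cases "v \<in> B")
  case True
  then show ?thesis using B by (simp add: vec.span_redundant vec.span_base span_of_subspace qbasis_def indep_def)
next
  case False
  let ?B = "vec.span (insert v B)"
  have Bi: "vec.subspace B" "\<rho> B = vec.dim B" using B unfolding qbasis_def indep_def by auto
  have sub: "B \<subseteq> ?B" using vec.span_superset[of "insert v B"] by blast
  have "\<rho> ?B \<noteq> Suc (\<rho> B)"
  proof
    assume "\<rho> ?B = Suc (\<rho> B)"
    then have "indep \<rho> ?B" unfolding indep_def using dim_span_insert[OF Bi(1) False] Bi(2) by simp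
    then have "?B = B" using B sub unfolding qbasis_def by blast
    then show False using False vec.span_base[of v "insert v B"] by simp
  qed
  then show ?thesis
    using qmatroid_mono[OF qm Bi(1) vec.subspace_span sub] qmatroid_span_insert_le[OF qm Bi(1), of v]
    by simp
qed

lemma qbasis_dim:
  assumes qm: "qmatroid \<rho>" and B: "qbasis \<rho> B"
  shows "vec.dim B = qrank \<rho>"
proof -
  have B': "vec.subspace B" "\<rho> B = vec.dim B" using B unfolding qbasis_def indep_def by auto
  have "\<rho> UNIV = \<rho> B"
    using qmatroid_rank_const_above[OF qm B'(1) qbasis_span_insert[OF qm B]] by simp
  then show ?thesis using B'(2) unfolding qrank_def by simp
qed

lemma qbasis_of_indep_dim:
  assumes qm: "qmatroid \<rho>" and X: "indep \<rho> X" "vec.dim X = qrank \<rho>"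
  shows "qbasis \<rho> X"
  unfolding qbasis_def
proof (intro conjI allI impI)
  fix U assume U: "indep \<rho> U \<and> X \<subseteq> U"
  then have "vec.dim U \<le> vec.dim X"
    using qmatroid_mono[OF qm, of U UNIV] X(2) unfolding indep_def qrank_def by simp
  then show "U = X" using vec.subspace_dim_equal[of X U] X(1) U unfolding indep_def by simp
qed (rule X(1))

section \<open>Complete flags and facets\<close>

definition complete_flag :: "('a::field^('n::{finite,linorder})) set list \<Rightarrow> bool" where
  "complete_flag L \<longleftrightarrow> (\<forall>m<length L. vec.subspace (L!m) \<and> vec.dim (L!m) = Suc m) \<and>
     (\<forall>m. Suc m < length L \<longrightarrow> L!m \<subseteq> L!(Suc m))"

definition fresh_minima :: "('a::{finite,field} \<Rightarrow> nat) \<Rightarrow> ('a^('n::{finite,linorder})) set list \<Rightarrow> bool" where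
  "fresh_minima fo L \<longleftrightarrow> (\<forall>m. Suc m < length L \<longrightarrow> vmin fo (L!(Suc m) - {0}) \<notin> L!m)"

lemma complete_flagD:
  assumes "complete_flag L" "m < length L"
  shows complete_flag_subspace: "vec.subspace (L!m)"
    and complete_flag_dim: "vec.dim (L!m) = Suc m"
  using assms unfolding complete_flag_def by auto

lemma complete_flag_mono:
  assumes L: "complete_flag L" and "i \<le> j" "j < length L"
  shows "L!i \<subseteq> L!j"
  using assms(2,3)
proof (induction j)
  case (Suc j)
  then show ?case using L unfolding complete_flag_def by (cases "i = Suc j") auto
qed simp

lemma complete_flag_nonzero: "complete_flag L \<Longrightarrow> m < length L \<Longrightarrow> L!m \<noteq> {0}"
  using complete_flag_dim by fastforce

text \<open>\<open>({0} # L) ! j\<close> is the member of dimension \<open>j\<close> of the flag extended by the zero space.\<close>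

lemma complete_flag_lower:
  assumes L: "complete_flag L" and j: "j < length L"
  shows "vec.subspace (({0} # L) ! j)" "vec.dim (({0} # L) ! j) = j" "({0} # L) ! j \<subseteq> L!j"
proof -
  have "vec.subspace (({0} # L) ! j) \<and> vec.dim (({0} # L) ! j) = j \<and> ({0} # L) ! j \<subseteq> L!j"
  proof (cases j)
    case 0
    then show ?thesis using complete_flag_subspace[OF L j] by (simp add: vec.subspace_0)
  next
    case (Suc k)
    then show ?thesis using L j complete_flagD[OF L, of k] complete_flag_mono[OF L, of k j] by simp
  qed
  then show "vec.subspace (({0} # L) ! j)" "vec.dim (({0} # L) ! j) = j" "({0} # L) ! j \<subseteq> L!j"
    by blast+
qed

lemma nth_Cons_snoc_length: "(x # xs @ [y]) ! length xs = last (x # xs)"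
  by (induction xs arbitrary: x) auto

lemma complete_flag_snoc:
  assumes L: "complete_flag L" and W: "vec.subspace W" "vec.dim W = Suc (length L)"
    and top: "last ({0} # L) \<subseteq> W"
  shows "complete_flag (L @ [W])"
  unfolding complete_flag_def
proof (intro conjI allI impI)
  fix m assume "m < length (L @ [W])"
  then have "m < length L \<or> m = length L" "(L @ [W]) ! m = (if m < length L then L ! m else W)"
    by (auto simp: nth_append)
  then show "vec.subspace ((L @ [W]) ! m)" "vec.dim ((L @ [W]) ! m) = Suc m"
    using complete_flagD[OF L] W by auto
next
  fix m assume m: "Suc m < length (L @ [W])"
  show "(L @ [W]) ! m \<subseteq> (L @ [W]) ! Suc m"
  proof (cases "Suc m < length L")
    case True
    then show ?thesis using complete_flag_mono[OF L, of m "Suc m"] by (simp add: nth_append)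
  next
    case False
    then have "Suc m = length L" using m by simp
    moreover from this have "last ({0} # L) = L ! m"
      using last_conv_nth[of L] by (metis diff_Suc_1 last_ConsR list.size(3) nat.distinct(1))
    ultimately show ?thesis using top by (simp add: nth_append)
  qed
qed

lemma fresh_minima_snoc:
  assumes "fresh_minima fo L" "L \<noteq> [] \<Longrightarrow> vmin fo (W - {0}) \<notin> last L"
  shows "fresh_minima fo (L @ [W])"
  unfolding fresh_minima_def
proof (intro allI impI)
  fix m assume m: "Suc m < length (L @ [W])"
  show "vmin fo ((L @ [W]) ! Suc m - {0}) \<notin> (L @ [W]) ! m"
  proof (cases "Suc m < length L")
    case True
    then show ?thesis using assms(1) unfolding fresh_minima_def by (simp add: nth_append)
  next
    case False
    then have "Suc m = length L" using m by simp
    moreover from this have "L \<noteq> []" "last L = L ! m"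
      using last_conv_nth[of L] by (metis diff_Suc_1 list.size(3) nat.distinct(1))+
    ultimately show ?thesis using assms(2) by (simp add: nth_append)
  qed
qed

lemma exists_fresh_complete_flag:
  fixes W :: "('a::{finite,field}^('n::{finite,linorder})) set"
  assumes fo: "field_order fo" and "vec.subspace W"
  shows "\<exists>L. complete_flag L \<and> length L = vec.dim W \<and> last ({0} # L) = W \<and> fresh_minima fo L"
  using assms(2)
proof (induction "vec.dim W" arbitrary: W)
  case 0
  then have "W = {0}" using vec.dim_eq_0[of W] vec.subspace_0[of W] by auto
  then show ?case using 0 by (intro exI[of _ "[]"]) (simp add: complete_flag_def fresh_minima_def)
next
  case (Suc d W)
  then have "W \<noteq> {0}" by (metis Zero_not_Suc vec.dim_singleton)
  define \<mu> where "\<mu> = vmin fo (W - {0})"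
  have "\<mu> \<in> W" "\<mu> \<noteq> 0"
    using vmin_subspace[OF fo Suc.prems \<open>W \<noteq> {0}\<close>] unfolding \<mu>_def by blast+
  then obtain W' where W': "vec.subspace W'" "W' \<subseteq> W" "vec.dim W' = d" "\<mu> \<notin> W'"
    by (rule exists_hyperplane_avoiding[OF Suc.prems Suc.hyps(2)[symmetric]])
  obtain L where L: "complete_flag L" "length L = d" "last ({0} # L) = W'" "fresh_minima fo L"
    using Suc.hyps(1)[OF W'(3)[symmetric] W'(1)] W'(3) by auto
  have "complete_flag (L @ [W])"
    using complete_flag_snoc[OF L(1) Suc.prems] L(2,3) W'(2) Suc.hyps(2) by simp
  moreover have "fresh_minima fo (L @ [W])"
    using L(3) W'(4) unfolding \<mu>_def by (intro fresh_minima_snoc[OF L(4)]) auto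
  ultimately show ?case using L(2) Suc.hyps(2) by (intro exI[of _ "L @ [W]"]) simp
qed

lemma facet_iff_complete_flag:
  "facet \<rho> A \<longleftrightarrow> complete_flag A \<and> length A = qrank \<rho> \<and> (\<forall>m<length A. indep \<rho> (A!m))"
proof -
  have "A!m \<subset> A!(Suc m) \<longleftrightarrow> A!m \<subseteq> A!(Suc m)"
    if "vec.dim (A!m) = Suc m" "vec.dim (A!(Suc m)) = Suc (Suc m)" for m
    using that by auto
  then show ?thesis unfolding facet_def complete_flag_def indep_def
    by (metis Suc_lessD)
qed

lemma facet_snoc:
  assumes qm: "qmatroid \<rho>" and L: "complete_flag L" "last ({0} # L) \<subseteq> G"
    and G: "indep \<rho> G" "vec.dim G = Suc (length L)" "Suc (length L) = qrank \<rho>"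
  shows "facet \<rho> (L @ [G])"
proof -
  have FA: "complete_flag (L @ [G])"
    using complete_flag_snoc[OF L(1) _ G(2) L(2)] G(1) unfolding indep_def by simp
  have "(L @ [G]) ! m \<subseteq> G" if "m < length (L @ [G])" for m
    using complete_flag_mono[OF FA, of m "length L"] that by (simp add: nth_append)
  then show ?thesis
    unfolding facet_iff_complete_flag
    using FA G(3) indep_subspace[OF qm G(1)] complete_flag_subspace[OF FA] by auto
qed

lemma facet_vertex_eq_iff:
  assumes "facet \<rho> A" "i < length A" "j < length A"
  shows "A!i = A!j \<longleftrightarrow> i = j"
  using assms complete_flag_dim[of A] unfolding facet_iff_complete_flag by (metis Suc_inject)

lemma facet_eq_off_vertex:
  assumes A: "facet \<rho> A" and B: "facet \<rho> B" and j: "j < length A"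
    and AB: "set A - {A!j} \<subseteq> set B" and i: "i < length A" "i \<noteq> j"
  shows "B!i = A!i"
proof -
  have "A!i \<noteq> A!j" using facet_vertex_eq_iff[OF A i(1) j] i(2) by simp
  then have "A!i \<in> set B" using AB nth_mem[OF i(1)] by blast
  then obtain i' where i': "i' < length B" "B!i' = A!i" by (metis in_set_conv_nth)
  have "Suc i' = Suc i"
    using complete_flag_dim[of B i'] complete_flag_dim[of A i] A B i i'
    unfolding facet_iff_complete_flag by metis
  then show ?thesis using i' by simp
qed

lemma restr_subset_set: "restr fo \<rho> A \<subseteq> set A"
  unfolding restr_def by auto

lemma restr_memE:
  assumes A: "facet \<rho> A" and j: "j < length A" and R: "A!j \<in> restr fo \<rho> A"
  obtains X where "indep \<rho> X" "vec.dim X = Suc j" "({0} # A) ! j \<subseteq> X"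
    "Suc j < length A \<longrightarrow> X \<subseteq> A!(Suc j)" "sub_lt fo X (A!j)"
proof -
  obtain m B where m: "m < length A" "A!j = A!m" and B: "facet \<rho> B" "facet_lt fo B A"
      "set A - {A!m} \<subseteq> set B"
    using R unfolding restr_def by blast
  have "m = j" using facet_vertex_eq_iff[OF A j m(1)] m(2) by simp
  then have eq: "\<And>i. i < length A \<Longrightarrow> i \<noteq> j \<Longrightarrow> B!i = A!i"
    using facet_eq_off_vertex[OF A B(1) j] B(3) by blast
  have len: "length B = length A" using A B(1) unfolding facet_def by simp
  have FB: "complete_flag B" and indB: "\<forall>m<length B. indep \<rho> (B!m)"
    using B(1) unfolding facet_iff_complete_flag by auto
  obtain e where e: "e < length A" "B!e \<noteq> A!e" "sub_lt fo (B!e) (A!e)"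
    using B(2) unfolding facet_lt_def by blast
  have "e = j" using eq e(1,2) by blast
  show ?thesis
  proof (rule that[of "B!j"])
    show "indep \<rho> (B!j)" "vec.dim (B!j) = Suc j" using indB complete_flag_dim[OF FB] j len by auto
    show "sub_lt fo (B!j) (A!j)" using e(3) \<open>e = j\<close> by simp
    have "({0} # A) ! j = ({0} # B) ! j" using eq j by (cases j) auto
    then show "({0} # A) ! j \<subseteq> B!j" using complete_flag_lower(3)[OF FB] j len by simp
    show "Suc j < length A \<longrightarrow> B!j \<subseteq> A!(Suc j)"
      using complete_flag_mono[OF FB, of j "Suc j"] eq[of "Suc j"] len by simp
  qed
qed

lemma restr_memI:
  assumes A: "facet \<rho> A" and j: "j < length A" and X: "indep \<rho> X" "vec.dim X = Suc j"
    and lower: "({0} # A) ! j \<subseteq> X" and upper: "Suc j < length A \<Longrightarrow> X \<subseteq> A!(Suc j)"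
    and lt: "sub_lt fo X (A!j)"
  shows "A!j \<in> restr fo \<rho> A"
proof -
  define B where "B = A[j := X]"
  have len: "length B = length A" unfolding B_def by simp
  have Bn: "\<And>i. i < length A \<Longrightarrow> B!i = (if i = j then X else A!i)" unfolding B_def using j by simp
  have FA: "complete_flag A" "length A = qrank \<rho>" "\<forall>m<length A. indep \<rho> (A!m)"
    using A unfolding facet_iff_complete_flag by auto
  have "complete_flag B" unfolding complete_flag_def
  proof (intro conjI allI impI)
    fix m assume "m < length B"
    then show "vec.subspace (B!m)" "vec.dim (B!m) = Suc m"
      using Bn len X complete_flagD[OF FA(1)] unfolding indep_def by auto
  next
    fix m assume m: "Suc m < length B"
    consider "Suc m = j" | "m = j" | "Suc m \<noteq> j" "m \<noteq> j" by blast
    then show "B!m \<subseteq> B!(Suc m)"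
    proof cases
      case 1
      then show ?thesis using Bn m len lower by auto
    next
      case 2
      then show ?thesis using Bn m len upper by auto
    qed (use Bn m len complete_flag_mono[OF FA(1), of m "Suc m"] in auto)
  qed
  moreover have "\<forall>m<length B. indep \<rho> (B!m)" using Bn len FA(3) X(1) by auto
  ultimately have "facet \<rho> B" unfolding facet_iff_complete_flag using len FA(2) by simp
  moreover have "facet_lt fo B A" unfolding facet_lt_def
    using Bn len j sub_lt_neq[OF lt] lt by (intro exI[of _ j]) auto
  moreover have "set A - {A!j} \<subseteq> set B"
  proof
    fix x assume "x \<in> set A - {A!j}"
    then obtain i where "i < length A" "x = A!i" "i \<noteq> j" by (auto simp: in_set_conv_nth)
    then show "x \<in> set B" using Bn len by (metis nth_mem)
  qed
  ultimately show ?thesis unfolding restr_def using j by blast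
qed

section \<open>Facets all of whose vertices lie in the restriction\<close>

lemma fresh_minimum_imp_restr:
  fixes fo :: "'a::{finite,field} \<Rightarrow> nat" and \<rho> :: "('a^('n::{finite,linorder})) set \<Rightarrow> nat"
  assumes fo: "field_order fo" and qm: "qmatroid \<rho>" and A: "facet \<rho> A"
    and j: "Suc j < length A" and fresh: "vmin fo (A!(Suc j) - {0}) \<notin> A!j"
  shows "A!j \<in> restr fo \<rho> A"
proof -
  have FA: "complete_flag A" "\<forall>m<length A. indep \<rho> (A!m)"
    using A unfolding facet_iff_complete_flag by auto
  define N where "N = A!(Suc j)"
  define \<mu> where "\<mu> = vmin fo (N - {0})"
  define P where "P = ({0} # A) ! j"
  have N: "vec.subspace N" "N \<noteq> {0}" "indep \<rho> N"
    using complete_flag_subspace[OF FA(1) j] complete_flag_nonzero[OF FA(1) j] FA(2) j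
    unfolding N_def by auto
  have Aj: "vec.subspace (A!j)" "A!j \<noteq> {0}" "A!j \<subseteq> N"
    using complete_flag_subspace[OF FA(1)] complete_flag_nonzero[OF FA(1)]
      complete_flag_mono[OF FA(1), of j "Suc j"] j unfolding N_def by auto
  have P: "vec.subspace P" "vec.dim P = j" "P \<subseteq> A!j"
    using complete_flag_lower[OF FA(1), of j] j unfolding P_def by auto
  have \<mu>: "\<mu> \<in> N" "\<mu> \<notin> A!j" "\<mu> \<notin> P"
    using vmin_subspace_mem[OF fo N(1,2)] fresh P(3) unfolding \<mu>_def N_def by auto
  define K where "K = vec.span (insert \<mu> P)"
  have K: "vec.subspace K" "vec.dim K = Suc j" "P \<subseteq> K" "K \<subseteq> N" "\<mu> \<in> K"
    using dim_span_insert[OF P(1) \<mu>(3)] P(2) vec.span_superset[of "insert \<mu> P"]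
      vec.span_minimal[OF _ N(1), of "insert \<mu> P"] \<mu>(1) P(3) Aj(3)
    unfolding K_def by auto
  have "indep \<rho> K" using indep_subspace[OF qm N(3) K(1,4)] .
  moreover have "sub_lt fo K (A!j)"
    using sub_lt_of_vmin_mem[OF fo N(1,2) K(1,4) _ Aj] K(5) \<mu>(2) unfolding \<mu>_def by simp
  ultimately show ?thesis
    using restr_memI[OF A _ _ K(2)] K(3,4) j unfolding P_def N_def by simp
qed

text \<open>With \<open>g\<close> the least nonzero vector of \<open>G\<close>: the subspace replacing \<open>A\<^sub>i\<close> in an earlier facet
  misses \<open>g\<close>, for otherwise it would equal \<open>A\<^sub>i\<^sub>-\<^sub>1 + \<langle>g\<rangle> = A\<^sub>i\<close>; but then \<open>A\<^sub>i\<close> would precede it.\<close>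

lemma restr_imp_vmin_mem_lower:
  fixes fo :: "'a::{finite,field} \<Rightarrow> nat" and \<rho> :: "('a^('n::{finite,linorder})) set \<Rightarrow> nat"
  assumes fo: "field_order fo" and A: "facet \<rho> A" and i: "Suc i < length A"
    and R: "A!i \<in> restr fo \<rho> A"
    and G: "vec.subspace G" "G \<noteq> {0}" "A!(Suc i) \<subseteq> G" and gi: "vmin fo (G - {0}) \<in> A!i"
  shows "vmin fo (G - {0}) \<in> ({0} # A) ! i"
proof (rule ccontr)
  define g where "g = vmin fo (G - {0})"
  define P where "P = ({0} # A) ! i"
  assume "vmin fo (G - {0}) \<notin> ({0} # A) ! i"
  then have gP: "g \<notin> P" unfolding g_def P_def .
  have FA: "complete_flag A" using A unfolding facet_iff_complete_flag by simp
  have P: "vec.subspace P" "vec.dim P = i" "P \<subseteq> A!i"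
    using complete_flag_lower[OF FA, of i] i unfolding P_def by auto
  have Ai: "vec.subspace (A!i)" "A!i \<noteq> {0}" "vec.dim (A!i) = Suc i" "A!i \<subseteq> G"
    using complete_flagD[OF FA, of i] complete_flag_nonzero[OF FA, of i]
      complete_flag_mono[OF FA, of i "Suc i"] G(3) i by auto
  have "i < length A" using i by simp
  then obtain K where K: "indep \<rho> K" "vec.dim K = Suc i" "P \<subseteq> K"
      "Suc i < length A \<longrightarrow> K \<subseteq> A!(Suc i)" "sub_lt fo K (A!i)"
    unfolding P_def by (rule restr_memE[OF A _ R])
  have Ks: "vec.subspace K" "K \<noteq> {0}" using K(1,2) unfolding indep_def by auto
  have "g \<notin> K"
  proof
    assume "g \<in> K"
    then have "K = vec.span (insert g P)"
      using span_insert_eq_subspace[OF P(1) Ks(1) K(3)] K(2) P(2) gP by simp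
    also have "\<dots> = A!i"
      using span_insert_eq_subspace[OF P(1) Ai(1) P(3)] Ai(3) P(2) gi gP unfolding g_def by simp
    finally show False using sub_lt_neq[OF K(5)] by simp
  qed
  then have "sub_lt fo (A!i) K"
    using sub_lt_of_vmin_mem[OF fo G(1,2) Ai(1,4) gi Ks] K(4) i G(3) unfolding g_def by auto
  then show False using sub_lt_asym K(5) by blast
qed

lemma restr_imp_fresh_minima:
  fixes fo :: "'a::{finite,field} \<Rightarrow> nat" and \<rho> :: "('a^('n::{finite,linorder})) set \<Rightarrow> nat"
  assumes fo: "field_order fo" and A: "facet \<rho> A" and R: "set A \<subseteq> restr fo \<rho> A"
  shows "fresh_minima fo A"
  unfolding fresh_minima_def
proof (intro allI impI notI)
  fix k assume k: "Suc k < length A" and gk: "vmin fo (A!(Suc k) - {0}) \<in> A!k"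
  have FA: "complete_flag A" using A unfolding facet_iff_complete_flag by simp
  define G where "G = A!(Suc k)"
  have G: "vec.subspace G" "G \<noteq> {0}"
    using complete_flag_subspace[OF FA k] complete_flag_nonzero[OF FA k] unfolding G_def by auto
  obtain i where gi: "vmin fo (G - {0}) \<in> A!i" and first: "\<forall>i'<i. vmin fo (G - {0}) \<notin> A!i'"
    using gk exists_least_iff[of "\<lambda>i. vmin fo (G - {0}) \<in> A!i"] unfolding G_def by blast
  have "i \<le> k" using first gk unfolding G_def by (meson not_le)
  then have "A!(Suc i) \<subseteq> G" "Suc i < length A"
    using complete_flag_mono[OF FA, of "Suc i" "Suc k"] k unfolding G_def by auto
  moreover have "A!i \<in> restr fo \<rho> A" using R nth_mem[of i A] k \<open>i \<le> k\<close> by auto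
  ultimately have "vmin fo (G - {0}) \<in> ({0} # A) ! i"
    using restr_imp_vmin_mem_lower[OF fo A _ _ G _ gi] by blast
  then show False using first vmin_subspace_nonzero[OF fo G] by (cases i) auto
qed

lemma restr_full_imp_bases:
  fixes fo :: "'a::{finite,field} \<Rightarrow> nat" and \<rho> :: "('a^('n::{finite,linorder})) set \<Rightarrow> nat"
  assumes fo: "field_order fo" and qm: "qmatroid \<rho>" and r: "qrank \<rho> \<ge> 1"
    and A: "facet \<rho> A" and R: "restr fo \<rho> A = set A"
  shows "\<exists>F G. qbasis \<rho> F \<and> qbasis \<rho> G \<and> sub_lt fo F G \<and>
    vec.dim (F \<inter> G) = qrank \<rho> - 1 \<and> vmin fo (G - {0}) \<notin> F"
proof -
  have FA: "complete_flag A" "length A = qrank \<rho>" "\<forall>m<length A. indep \<rho> (A!m)"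
    using A unfolding facet_iff_complete_flag by auto
  define t where "t = length A - 1"
  have t: "t < length A" "Suc t = length A" using r FA(2) unfolding t_def by auto
  define G where "G = A!t"
  define H where "H = ({0} # A) ! t"
  have G: "indep \<rho> G" "vec.subspace G" "G \<noteq> {0}" "vec.dim G = Suc t"
    using FA(3) complete_flagD[OF FA(1) t(1)] complete_flag_nonzero[OF FA(1) t(1)] t
    unfolding G_def by auto
  have H: "vec.subspace H" "vec.dim H = t" "H \<subseteq> G"
    using complete_flag_lower[OF FA(1) t(1)] unfolding H_def G_def by auto
  have "A!t \<in> restr fo \<rho> A" using R t(1) by simp
  then obtain F where F: "indep \<rho> F" "vec.dim F = Suc t" "H \<subseteq> F"
      "Suc t < length A \<longrightarrow> F \<subseteq> A!(Suc t)" "sub_lt fo F G"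
    unfolding H_def G_def by (rule restr_memE[OF A t(1)])
  have Fs: "vec.subspace F" using F(1) unfolding indep_def by simp
  have "qbasis \<rho> F" "qbasis \<rho> G" using qbasis_of_indep_dim[OF qm] F(1,2) G(1,4) t(2) FA(2) by auto
  moreover have HFG: "F \<inter> G = H"
    by (rule inter_eq_common_hyperplane[OF Fs F(2) G(2,4) sub_lt_neq[OF F(5)] H(1,2)])
      (use F(3) H(3) in blast)
  moreover have "vmin fo (G - {0}) \<notin> H"
  proof (cases t)
    case 0
    then show ?thesis using vmin_subspace_nonzero[OF fo G(2,3)] unfolding H_def by simp
  next
    case (Suc m)
    then show ?thesis
      using restr_imp_fresh_minima[OF fo A] R t(2) unfolding fresh_minima_def H_def G_def by simp
  qed
  then have "vmin fo (G - {0}) \<notin> F" using vmin_subspace_mem[OF fo G(2,3)] HFG by blast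
  ultimately show ?thesis using F(5) H(2) FA(2) t(2) by (intro exI conjI) auto
qed

lemma bases_imp_restr_full:
  fixes fo :: "'a::{finite,field} \<Rightarrow> nat" and \<rho> :: "('a^('n::{finite,linorder})) set \<Rightarrow> nat"
  assumes fo: "field_order fo" and qm: "qmatroid \<rho>" and r: "qrank \<rho> \<ge> 1"
    and F: "qbasis \<rho> F" and G: "qbasis \<rho> G" and lt: "sub_lt fo F G"
    and FG: "vec.dim (F \<inter> G) = qrank \<rho> - 1" and fresh: "vmin fo (G - {0}) \<notin> F"
  shows "\<exists>A. facet \<rho> A \<and> restr fo \<rho> A = set A"
proof -
  have F': "indep \<rho> F" "vec.subspace F" "vec.dim F = qrank \<rho>"
    using F qbasis_dim[OF qm F] unfolding qbasis_def indep_def by auto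
  have G': "indep \<rho> G" "vec.subspace G" "vec.dim G = qrank \<rho>"
    using G qbasis_dim[OF qm G] unfolding qbasis_def indep_def by auto
  define H where "H = F \<inter> G"
  have H: "vec.subspace H" "H \<subseteq> F" "H \<subseteq> G"
    using F'(2) G'(2) unfolding H_def by (auto simp: vec.subspace_inter)
  obtain L where L: "complete_flag L" "length L = qrank \<rho> - 1" "last ({0} # L) = H"
      "fresh_minima fo L"
    using exists_fresh_complete_flag[OF fo H(1)] FG unfolding H_def by auto
  define A where "A = L @ [G]"
  have lenA: "length A = qrank \<rho>" "Suc (length L) = qrank \<rho>" using L(2) r unfolding A_def by auto
  have A: "facet \<rho> A" unfolding A_def using facet_snoc[OF qm L(1)] L(3) H(3) G'(1,3) lenA(2) by simp
  have top: "A ! length L = G" "({0} # A) ! length L = H"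
    using nth_Cons_snoc_length[of "{0}" L G] L(3) unfolding A_def by simp_all
  have "fresh_minima fo A"
    using L(3) H(2) fresh unfolding A_def by (intro fresh_minima_snoc[OF L(4)]) auto
  have "A!j \<in> restr fo \<rho> A" if j: "j < length A" for j
  proof (cases "j = length L")
    case True
    then show ?thesis using restr_memI[OF A j F'(1)] F'(3) lenA top H(2) lt by simp
  next
    case False
    then have "Suc j < length A" using j unfolding A_def by simp
    then show ?thesis
      using fresh_minimum_imp_restr[OF fo qm A] \<open>fresh_minima fo A\<close> unfolding fresh_minima_def by blast
  qed
  then have "set A \<subseteq> restr fo \<rho> A" by (auto simp: in_set_conv_nth)
  then have "restr fo \<rho> A = set A" using restr_subset_set by blast
  then show ?thesis using A by blast
qed

theorem lemma5p8:
  fixes fo :: "'a::{finite,field} \<Rightarrow> nat"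
    and \<rho> :: "('a^('n::{finite,linorder})) set \<Rightarrow> nat"
  assumes "field_order fo"
    and "qmatroid \<rho>"
    and "qrank \<rho> \<ge> 1"
  shows "(\<exists>A. facet \<rho> A \<and> restr fo \<rho> A = set A) \<longleftrightarrow>
    (\<exists>F G. qbasis \<rho> F \<and> qbasis \<rho> G \<and> sub_lt fo F G \<and>
       vec.dim (F \<inter> G) = qrank \<rho> - 1 \<and> vmin fo (G - {0}) \<notin> F)"
  using restr_full_imp_bases[OF assms] bases_imp_restr_full[OF assms] by blast

end
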